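(* Let $G=(V,\mathcal E,w)$ be an undirected, connected, weighted graph on $n$ nodes with Laplacian $L$, and let $b>0$. Consider the delay-free second-order consensus network with dynamics noise $$\dot x(t)=v(t),\qquad \dot v(t)=-L\,x(t)-bL\,v(t)+\xi(t),\qquad y(t)=M_nx(t),$$ where $\xi_1,\dots,\xi_n$ are mutually independent zero-mean Gaussian white noises with intensities $\sigma_1^2,\dots,\sigma_n^2$. Then for every agent $i$ the centrality index is $$\eta_i=\frac1{2b}\Big[(L^2)^{\dagger}\Big]_{ii}.$$
   Context: Notation: - $M_n=I_n-\frac1n\mathbf1\mathbf1^T$. - $X^\dagger$ is the Moore–Penrose pseudo-inverse. The performance is $\rho_{ss}=\lim_{t\to\infty}\mathbb E[y^Ty]$. Equivalently, it is the squared $\mathcal H_2$ norm of the transfer matrix from $\xi$ to $y$, with noise intensities included as $\mathrm{diag}(\sigma_1,\dots,\sigma_n)$. The centrality index of agent $i$ is $\eta_i=\partial\rho_{ss}/\partial\sigma_i^2$. *)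

theory Defs
  imports "HOL-Analysis.Analysis"
begin

text \<open>Matrix power with respect to the matrix product (note: the library's ^ on vec is entrywise).\<close>
fun mpow :: "real^'n^'n \<Rightarrow> nat \<Rightarrow> real^'n^'n" where
  "mpow A 0 = mat 1"
| "mpow A (Suc k) = A ** mpow A k"

definition mexp :: "real^'n^'n \<Rightarrow> real^'n^'n" where
  "mexp A = (\<Sum>k. (1 / fact k) *\<^sub>R mpow A k)"

definition pinv :: "real^'n^'m \<Rightarrow> real^'m^'n" where
  "pinv X = (THE Y. X ** Y ** X = X \<and> Y ** X ** Y = Y \<and>
                   transpose (X ** Y) = X ** Y \<and> transpose (Y ** X) = Y ** X)"

definition diag_mat :: "real^'n \<Rightarrow> real^'n^'n" where
  "diag_mat s = (\<chi> i j. if i = j then s $ i else 0)"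

definition centering :: "real^'n^'n" where
  "centering = (\<chi> i j. (if i = j then 1 else 0) - 1 / real CARD('n))"

definition weighted_undirected_graph :: "('n \<Rightarrow> 'n \<Rightarrow> real) \<Rightarrow> bool" where
  "weighted_undirected_graph w \<longleftrightarrow>
     (\<forall>i j. w i j = w j i) \<and> (\<forall>i j. 0 \<le> w i j) \<and> (\<forall>i. w i i = 0)"

definition graph_connected :: "('n \<Rightarrow> 'n \<Rightarrow> real) \<Rightarrow> bool" where
  "graph_connected w \<longleftrightarrow> (\<forall>i j. (\<lambda>a c. 0 < w a c)\<^sup>*\<^sup>* i j)"

definition laplacian :: "('n::finite \<Rightarrow> 'n \<Rightarrow> real) \<Rightarrow> real^'n^'n" where
  "laplacian w = (\<chi> i j. if i = j then (\<Sum>k\<in>UNIV. w i k) else - w i j)"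

section \<open>Second-order consensus network, state (x, v) indexed by 'n + 'n (Inl = x, Inr = v)\<close>

definition so_A :: "real \<Rightarrow> real^'n^'n \<Rightarrow> real^('n + 'n)^('n + 'n)" where
  "so_A b L = (\<chi> r c. case (r, c) of
      (Inl i, Inl j) \<Rightarrow> 0
    | (Inl i, Inr j) \<Rightarrow> (if i = j then 1 else 0)
    | (Inr i, Inl j) \<Rightarrow> - (L $ i $ j)
    | (Inr i, Inr j) \<Rightarrow> - b * (L $ i $ j))"

definition so_B :: "real^'n \<Rightarrow> real^'n^('n + 'n)" where
  "so_B \<sigma> = (\<chi> r k. case r of Inl i \<Rightarrow> 0 | Inr i \<Rightarrow> (if i = k then \<sigma> $ k else 0))"

definition so_C :: "real^('n + 'n)^'n" where
  "so_C = (\<chi> i c. case c of Inl j \<Rightarrow> (centering :: real^'n^'n) $ i $ j | Inr j \<Rightarrow> 0)"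

text \<open>Steady-state performance = squared H2 norm of the transfer matrix from xi to y.\<close>
definition rho_ss :: "real \<Rightarrow> real^'n^'n \<Rightarrow> real^'n \<Rightarrow> real" where
  "rho_ss b L \<sigma> = integral {0..} (\<lambda>t.
     trace (so_C ** mexp (t *\<^sub>R so_A b L) ** so_B \<sigma> **
            transpose (so_C ** mexp (t *\<^sub>R so_A b L) ** so_B \<sigma>)))"

end

theory Submission
  imports Defs
begin

text \<open>
  Write \<open>P = L\<^sup>\<dagger>\<close>. The response of the network to a unit impulse in \<open>\<xi>\<^sub>k\<close> is the free motion
  from \<open>x(0) = 0, v(0) = e\<^sub>k\<close>, and the noise enters \<open>\<rho>\<^sub>s\<^sub>s\<close> as \<open>\<Sum>\<^sub>k \<sigma>\<^sub>k\<^sup>2 \<integral>\<^sub>0\<^sup>\<infinity> |M x\<^sub>k(t)|\<^sup>2 dt\<close>.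
  Along any centred trajectory the function
  \<open>W(x, v) = (|P v + b x|\<^sup>2 + x\<^sup>T P x) / (2b)\<close> satisfies \<open>W' = -|x|\<^sup>2\<close>, so the integral equals
  \<open>W(0) - W(\<infinity>)\<close>. A second, strict Lyapunov function shows \<open>W(T) = O(1/T)\<close>, hence
  \<open>W(\<infinity>) = 0\<close> and the integral is \<open>W(0, M e\<^sub>k) = |P e\<^sub>k|\<^sup>2 / (2b) = [P\<^sup>2]\<^sub>k\<^sub>k / (2b)\<close>.
  Finally \<open>P\<^sup>2 = (L\<^sup>2)\<^sup>\<dagger>\<close>, and \<open>\<rho>\<^sub>s\<^sub>s\<close> is affine in each \<open>\<sigma>\<^sub>i\<^sup>2\<close>.
\<close>

lemma matrix_diff_ldistrib: "(A::real^'m^'n) ** (B - C) = A ** B - A ** C"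
  by (simp add: matrix_matrix_mult_def vec_eq_iff sum_subtractf algebra_simps)

lemma matrix_diff_rdistrib: "((A::real^'m^'n) - B) ** C = A ** C - B ** C"
  by (simp add: matrix_matrix_mult_def vec_eq_iff sum_subtractf algebra_simps)

lemma matrix_add_rdistrib: "((A::real^'m^'n) + B) ** C = A ** C + B ** C"
  by (simp add: matrix_matrix_mult_def vec_eq_iff sum.distrib algebra_simps)

lemma transpose_add: "transpose ((A::real^'m^'n) + B) = transpose A + transpose B"
  by (simp add: transpose_def vec_eq_iff)

lemma transpose_diff: "transpose ((A::real^'m^'n) - B) = transpose A - transpose B"
  by (simp add: transpose_def vec_eq_iff)

lemma inner_matrix_vector_symmetric:
  fixes A :: "real^'n^'n"
  assumes "transpose A = A"
  shows "x \<bullet> (A *v y) = (A *v x) \<bullet> y"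
  by (metis assms dot_lmul_matrix transpose_matrix_vector)

lemma matrix_inv_right: "invertible (A::real^'n^'n) \<Longrightarrow> A ** matrix_inv A = mat 1"
  unfolding matrix_inv_def invertible_def by (rule conjunct1[OF someI_ex])

lemma matrix_inv_left: "invertible (A::real^'n^'n) \<Longrightarrow> matrix_inv A ** A = mat 1"
  unfolding matrix_inv_def invertible_def by (rule conjunct2[OF someI_ex])

lemma transpose_matrix_inv_symmetric:
  fixes A :: "real^'n^'n"
  assumes "invertible A" and "transpose A = A"
  shows "transpose (matrix_inv A) = matrix_inv A"
proof -
  have "transpose (matrix_inv A) ** A = mat 1"
    using arg_cong[OF matrix_inv_right[OF assms(1)], of transpose]
    by (simp add: matrix_transpose_mul assms(2))
  then have "transpose (matrix_inv A) ** (A ** matrix_inv A) = matrix_inv A"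
    by (simp add: matrix_mul_assoc)
  then show ?thesis
    by (simp add: matrix_inv_right[OF assms(1)])
qed

lemma matrix_vector_mult_bound:
  fixes A :: "real^'n^'n"
  obtains K where "0 < K" and "\<And>y. norm (A *v y) \<le> K * norm y" and "\<And>y. y \<bullet> (A *v y) \<le> K * (y \<bullet> y)"
proof -
  obtain K where "0 < K" and K: "\<And>y. norm (A *v y) \<le> norm y * K"
    using bounded_linear.pos_bounded[OF matrix_vector_mul_bounded_linear] by blast
  moreover have "y \<bullet> (A *v y) \<le> K * (y \<bullet> y)" for y
  proof -
    have "y \<bullet> (A *v y) \<le> norm y * norm (A *v y)"
      by (rule norm_cauchy_schwarz)
    also have "\<dots> \<le> norm y * (norm y * K)"
      by (intro mult_left_mono K) auto
    finally show ?thesis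
      by (simp add: dot_square_norm power2_eq_square mult_ac)
  qed
  ultimately show ?thesis
    using that by (simp add: mult.commute)
qed

section \<open>The Moore--Penrose pseudo-inverse\<close>

definition moore_penrose :: "real^'n^'m \<Rightarrow> real^'m^'n \<Rightarrow> bool" where
  "moore_penrose X Y \<longleftrightarrow> X ** Y ** X = X \<and> Y ** X ** Y = Y \<and>
     transpose (X ** Y) = X ** Y \<and> transpose (Y ** X) = Y ** X"

lemma moore_penrose_unique:
  assumes "moore_penrose X Y" and "moore_penrose X Z"
  shows "Z = Y"
proof -
  from assms have XYX: "X ** Y ** X = X" and YXY: "Y ** X ** Y = Y"
    and XY: "transpose (X ** Y) = X ** Y" and YX: "transpose (Y ** X) = Y ** X"
    and XZX: "X ** Z ** X = X" and ZXZ: "Z ** X ** Z = Z"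
    and XZ: "transpose (X ** Z) = X ** Z" and ZX: "transpose (Z ** X) = Z ** X"
    by (auto simp: moore_penrose_def)
  have "Y = Y ** transpose (X ** Y)"
    using YXY XY by (simp add: matrix_mul_assoc)
  also have "\<dots> = Y ** transpose (X ** Z ** X ** Y)"
    using XZX by simp
  also have "\<dots> = Y ** transpose (X ** Y) ** transpose (X ** Z)"
    by (simp add: matrix_transpose_mul matrix_mul_assoc)
  also have "\<dots> = Y ** X ** Z"
    using XY XZ YXY by (simp add: matrix_mul_assoc)
  finally have Y_eq: "Y = Y ** X ** Z" .
  have "Z = transpose (Z ** X) ** Z"
    using ZXZ ZX by simp
  also have "\<dots> = transpose (Z ** X ** Y ** X) ** Z"
    by (metis XYX matrix_mul_assoc)
  also have "\<dots> = transpose (Y ** X) ** transpose (Z ** X) ** Z"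
    by (simp add: matrix_transpose_mul matrix_mul_assoc)
  also have "\<dots> = Y ** X ** (Z ** X ** Z)"
    using YX ZX by (simp add: matrix_mul_assoc)
  also have "\<dots> = Y ** X ** Z"
    using ZXZ by simp
  finally show ?thesis
    using Y_eq by simp
qed

lemma pinv_eqI: "moore_penrose X Y \<Longrightarrow> pinv X = Y"
  unfolding pinv_def moore_penrose_def[symmetric]
  by (rule the_equality) (auto intro: moore_penrose_unique)

lemma moore_penrose_square:
  assumes mp: "moore_penrose X Y" and comm: "X ** Y = Y ** X"
  shows "moore_penrose (X ** X) (Y ** Y)"
proof -
  from mp have XYX: "X ** Y ** X = X" and YXY: "Y ** X ** Y = Y"
    and XY: "transpose (X ** Y) = X ** Y"
    by (auto simp: moore_penrose_def)
  have XXYY: "X ** X ** (Y ** Y) = X ** Y"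
    by (metis XYX comm matrix_mul_assoc)
  have YYXX: "Y ** Y ** (X ** X) = X ** Y"
    by (metis YXY comm matrix_mul_assoc)
  show ?thesis
    unfolding moore_penrose_def XXYY YYXX
    using XY XYX YXY comm by (simp add: matrix_mul_assoc)
qed

definition averaging_mat :: "real^'n^'n" where
  "averaging_mat = (\<chi> i j. 1 / real CARD('n))"

lemma centering_eq: "centering = mat 1 - averaging_mat"
  by (simp add: centering_def averaging_mat_def mat_def vec_eq_iff)

lemma averaging_mat_idem: "averaging_mat ** averaging_mat = (averaging_mat :: real^'n::finite^'n)"
  by (simp add: averaging_mat_def matrix_matrix_mult_def vec_eq_iff power2_eq_square)

lemma transpose_averaging_mat: "transpose (averaging_mat :: real^'n^'n) = averaging_mat"
  by (simp add: averaging_mat_def transpose_def vec_eq_iff)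

lemma transpose_centering: "transpose (centering :: real^'n^'n) = centering"
  by (simp add: centering_def transpose_def vec_eq_iff)

lemma centering_idem: "centering ** centering = (centering :: real^'n^'n)"
  by (simp add: centering_eq matrix_diff_ldistrib matrix_diff_rdistrib averaging_mat_idem)

lemma inner_averaging_mat:
  "x \<bullet> ((averaging_mat :: real^'n^'n) *v x) = (\<Sum>i\<in>UNIV. x $ i)\<^sup>2 / real CARD('n)"
  by (simp add: averaging_mat_def inner_vec_def matrix_vector_mult_def power2_eq_square
      sum_distrib_left sum_distrib_right sum_divide_distrib mult.commute)

section \<open>The graph Laplacian\<close>

context
  fixes w :: "'n::finite \<Rightarrow> 'n \<Rightarrow> real"
  assumes graph: "weighted_undirected_graph w"
begin

lemma transpose_laplacian: "transpose (laplacian w) = laplacian w"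
  using graph by (simp add: transpose_def vec_eq_iff laplacian_def weighted_undirected_graph_def)

lemma laplacian_mult_vector:
  "(laplacian w *v x) $ i = (\<Sum>j\<in>UNIV. w i j) * x $ i - (\<Sum>j\<in>UNIV. w i j * x $ j)"
proof -
  have "(laplacian w *v x) $ i = (\<Sum>j\<in>UNIV. (if i = j then sum (w i) UNIV else - w i j) * x $ j)"
    by (simp add: matrix_vector_mult_def laplacian_def)
  also have "\<dots> = (\<Sum>j\<in>UNIV. (if i = j then sum (w i) UNIV * x $ j else 0) - w i j * x $ j)"
    using graph by (intro sum.cong) (auto simp: weighted_undirected_graph_def)
  finally show ?thesis
    by (simp add: sum_subtractf)
qed

lemma laplacian_mult_averaging_mat: "laplacian w ** averaging_mat = 0"
  using laplacian_mult_vector[of "\<chi> j. 1 / real CARD('n)"]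
  by (simp add: averaging_mat_def matrix_matrix_mult_def matrix_vector_mult_def vec_eq_iff
      sum_distrib_right[symmetric] sum_divide_distrib)

lemma averaging_mat_mult_laplacian: "averaging_mat ** laplacian w = 0"
  by (metis laplacian_mult_averaging_mat matrix_transpose_mul transpose_averaging_mat
      transpose_laplacian transpose_mat transpose_transpose mat_0)

lemma laplacian_mult_centering: "laplacian w ** centering = laplacian w"
  by (simp add: centering_eq matrix_diff_ldistrib laplacian_mult_averaging_mat)

lemma centering_mult_laplacian: "centering ** laplacian w = laplacian w"
  by (simp add: centering_eq matrix_diff_rdistrib averaging_mat_mult_laplacian)

lemma laplacian_quadratic_form:
  "x \<bullet> (laplacian w *v x) = (\<Sum>i\<in>UNIV. \<Sum>j\<in>UNIV. w i j * (x $ i - x $ j)\<^sup>2) / 2"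
proof -
  define S where "S = (\<Sum>i\<in>UNIV. \<Sum>j\<in>UNIV. w i j * (x $ i)\<^sup>2)"
  define T where "T = (\<Sum>i\<in>UNIV. \<Sum>j\<in>UNIV. w i j * x $ i * x $ j)"
  have S_swap: "(\<Sum>i\<in>UNIV. \<Sum>j\<in>UNIV. w i j * (x $ j)\<^sup>2) = S"
    using graph unfolding S_def weighted_undirected_graph_def
    by (subst sum.swap) simp
  have "x \<bullet> (laplacian w *v x) = S - T"
    unfolding inner_vec_def laplacian_mult_vector S_def T_def
    by (simp add: right_diff_distrib sum_distrib_left sum_distrib_right sum_subtractf
        power2_eq_square mult_ac)
  moreover have "(\<Sum>i\<in>UNIV. \<Sum>j\<in>UNIV. w i j * (x $ i - x $ j)\<^sup>2) = 2 * (S - T)"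
  proof -
    have "(\<Sum>i\<in>UNIV. \<Sum>j\<in>UNIV. w i j * (x $ i - x $ j)\<^sup>2)
        = S + (\<Sum>i\<in>UNIV. \<Sum>j\<in>UNIV. w i j * (x $ j)\<^sup>2) - 2 * T"
      unfolding S_def T_def
      by (simp add: power2_diff algebra_simps sum.distrib sum_subtractf sum_distrib_left)
    then show ?thesis
      using S_swap by simp
  qed
  ultimately show ?thesis
    by simp
qed

lemma laplacian_psd: "0 \<le> x \<bullet> (laplacian w *v x)"
  using graph unfolding laplacian_quadratic_form weighted_undirected_graph_def
  by (intro divide_nonneg_pos sum_nonneg mult_nonneg_nonneg) auto

lemma laplacian_quadratic_form_eq_0_imp_constant:
  assumes "graph_connected w" and "x \<bullet> (laplacian w *v x) = 0"
  shows "x $ i = x $ j"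
proof -
  have edge: "x $ a = x $ c" if "0 < w a c" for a c
  proof -
    have "(\<Sum>i\<in>UNIV. \<Sum>j\<in>UNIV. w i j * (x $ i - x $ j)\<^sup>2) = 0"
      using assms(2) by (simp add: laplacian_quadratic_form)
    then have "w a c * (x $ a - x $ c)\<^sup>2 = 0"
      using graph unfolding weighted_undirected_graph_def
      by (subst (asm) sum_nonneg_eq_0_iff; simp add: sum_nonneg sum_nonneg_eq_0_iff)
    then show ?thesis
      using that by simp
  qed
  from assms(1) have "(\<lambda>a c. 0 < w a c)\<^sup>*\<^sup>* i j"
    by (simp add: graph_connected_def)
  then show ?thesis
    by (induction rule: rtranclp_induct) (auto dest: edge)
qed

end

context
  fixes w :: "'n::finite \<Rightarrow> 'n \<Rightarrow> real"
  assumes graph: "weighted_undirected_graph w" and connected: "graph_connected w"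
begin

lemma invertible_laplacian_plus_averaging_mat: "invertible (laplacian w + averaging_mat)"
proof -
  have "x = 0" if "(laplacian w + averaging_mat) *v x = 0" for x
  proof -
    have "x \<bullet> (laplacian w *v x) + (\<Sum>i\<in>UNIV. x $ i)\<^sup>2 / real CARD('n) = 0"
      using arg_cong[OF that, of "inner x"]
      by (simp add: matrix_vector_mult_add_rdistrib inner_add_right inner_averaging_mat)
    moreover have "0 \<le> x \<bullet> (laplacian w *v x)"
      by (rule laplacian_psd[OF graph])
    moreover have "0 \<le> (\<Sum>i\<in>UNIV. x $ i)\<^sup>2 / real CARD('n)"
      by simp
    ultimately have form: "x \<bullet> (laplacian w *v x) = 0"
      and "(\<Sum>i\<in>UNIV. x $ i)\<^sup>2 / real CARD('n) = 0"
      by linarith+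
    then have sum: "(\<Sum>i\<in>UNIV. x $ i) = 0"
      by simp
    have "real CARD('n) * x $ i = 0" for i
    proof -
      have "x $ j = x $ i" for j
        using laplacian_quadratic_form_eq_0_imp_constant[OF graph connected form] .
      then have "(\<Sum>j\<in>UNIV. x $ j) = (\<Sum>j\<in>(UNIV :: 'n set). x $ i)"
        by (rule sum.cong[OF refl])
      then show ?thesis
        using sum by simp
    qed
    then show "x = 0"
      by (simp add: vec_eq_iff)
  qed
  then show ?thesis
    by (simp add: invertible_left_inverse matrix_left_invertible_ker)
qed

lemma laplacian_pinv:
  shows transpose_pinv_laplacian: "transpose (pinv (laplacian w)) = pinv (laplacian w)"
    and laplacian_mult_pinv: "laplacian w ** pinv (laplacian w) = centering"
    and pinv_mult_laplacian: "pinv (laplacian w) ** laplacian w = centering"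
    and centering_mult_pinv_laplacian: "centering ** pinv (laplacian w) = pinv (laplacian w)"
    and pinv_laplacian_mult_centering: "pinv (laplacian w) ** centering = pinv (laplacian w)"
proof -
  let ?L = "laplacian w" and ?J = "averaging_mat :: real^'n^'n"
  let ?K = "matrix_inv (?L + ?J)"
  define P where "P = ?K - ?J"
  note K_inv = invertible_laplacian_plus_averaging_mat
  have KJ: "?K ** ?J = ?J"
    by (metis K_inv matrix_add_rdistrib laplacian_mult_averaging_mat[OF graph] averaging_mat_idem
        add_0 matrix_mul_assoc matrix_inv_left matrix_mul_lid)
  have JK: "?J ** ?K = ?J"
    by (metis K_inv matrix_add_ldistrib averaging_mat_mult_laplacian[OF graph] averaging_mat_idem
        add_0 matrix_mul_assoc matrix_inv_right matrix_mul_rid)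
  have "?L ** ?K = mat 1 - ?J"
    using matrix_inv_right[OF K_inv] by (simp add: matrix_add_rdistrib JK eq_diff_eq)
  then have LP: "?L ** P = centering"
    by (simp add: P_def matrix_diff_ldistrib laplacian_mult_averaging_mat[OF graph] centering_eq)
  have "?K ** ?L = mat 1 - ?J"
    using matrix_inv_left[OF K_inv] by (simp add: matrix_add_ldistrib KJ eq_diff_eq)
  then have PL: "P ** ?L = centering"
    by (simp add: P_def matrix_diff_rdistrib averaging_mat_mult_laplacian[OF graph] centering_eq)
  have MP: "centering ** P = P" and PM: "P ** centering = P"
    by (simp_all add: P_def centering_eq matrix_diff_ldistrib matrix_diff_rdistrib KJ JK
        averaging_mat_idem)
  have P_sym: "transpose P = P"
    by (simp add: P_def transpose_diff transpose_averaging_mat transpose_matrix_inv_symmetric K_inv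
        transpose_add transpose_laplacian[OF graph])
  have "moore_penrose ?L P"
    unfolding moore_penrose_def LP PL
    by (simp add: transpose_centering centering_mult_laplacian[OF graph] MP)
  then have "pinv ?L = P"
    by (rule pinv_eqI)
  then show "transpose (pinv ?L) = pinv ?L" "?L ** pinv ?L = centering"
    "pinv ?L ** ?L = centering" "centering ** pinv ?L = pinv ?L" "pinv ?L ** centering = pinv ?L"
    using P_sym LP PL MP PM by simp_all
qed

lemma pinv_laplacian_square:
  "pinv (laplacian w ** laplacian w) = pinv (laplacian w) ** pinv (laplacian w)"
proof (rule pinv_eqI, rule moore_penrose_square)
  show "moore_penrose (laplacian w) (pinv (laplacian w))"
    unfolding moore_penrose_def laplacian_mult_pinv pinv_mult_laplacian
    by (simp add: transpose_centering centering_mult_laplacian[OF graph]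
        centering_mult_pinv_laplacian)
  show "laplacian w ** pinv (laplacian w) = pinv (laplacian w) ** laplacian w"
    by (simp add: laplacian_mult_pinv pinv_mult_laplacian)
qed

end

section \<open>The matrix exponential\<close>

lemma mpow_scaleR: "mpow (t *\<^sub>R A) k = t ^ k *\<^sub>R mpow A k"
  by (induction k) (simp_all add: matrix_scalar_ac scalar_matrix_assoc[symmetric])

lemma norm_matrix_le_sum_abs: "norm (X::real^'m^'k) \<le> (\<Sum>r\<in>UNIV. \<Sum>c\<in>UNIV. \<bar>X $ r $ c\<bar>)"
proof -
  have "norm X \<le> (\<Sum>r\<in>UNIV. norm (X $ r))"
    unfolding norm_vec_def by (rule L2_set_le_sum) simp
  also have "\<dots> \<le> (\<Sum>r\<in>UNIV. \<Sum>c\<in>UNIV. \<bar>X $ r $ c\<bar>)"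
    by (intro sum_mono norm_le_l1_cart)
  finally show ?thesis .
qed

lemma mpow_entry_bound:
  fixes A :: "real^'m::finite^'m"
  obtains B where "0 \<le> B" and "\<And>k r c. \<bar>mpow A k $ r $ c\<bar> \<le> B ^ k"
proof
  define S where "S = (\<Sum>r\<in>UNIV. \<Sum>c\<in>UNIV. \<bar>A $ r $ c\<bar>)"
  have entry: "\<bar>A $ r $ c\<bar> \<le> S" for r c
    unfolding S_def
    by (rule order_trans[OF member_le_sum member_le_sum[where f = "\<lambda>r. \<Sum>c\<in>UNIV. \<bar>A $ r $ c\<bar>"]])
       (auto intro: sum_nonneg)
  then have "0 \<le> S"
    by (meson abs_ge_zero order_trans)
  show "0 \<le> real CARD('m) * S"
    using \<open>0 \<le> S\<close> by simp
  show "\<bar>mpow A k $ r $ c\<bar> \<le> (real CARD('m) * S) ^ k" for k r c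
  proof (induction k arbitrary: r c)
    case 0
    then show ?case
      by (simp add: mat_def)
  next
    case (Suc k)
    have "\<bar>mpow A (Suc k) $ r $ c\<bar> \<le> (\<Sum>j\<in>UNIV. \<bar>A $ r $ j\<bar> * \<bar>mpow A k $ j $ c\<bar>)"
      by (simp add: matrix_matrix_mult_def abs_mult[symmetric] sum_abs)
    also have "\<dots> \<le> (\<Sum>j\<in>(UNIV::'m set). S * (real CARD('m) * S) ^ k)"
      by (intro sum_mono mult_mono entry Suc.IH) (auto simp: \<open>0 \<le> S\<close>)
    finally show ?case
      by simp
  qed
qed

lemma summable_mexp_series:
  fixes A :: "real^'m::finite^'m"
  shows "summable (\<lambda>k. (1 / fact k) *\<^sub>R mpow (t *\<^sub>R A) k)"
proof -
  obtain B where "0 \<le> B" and B: "\<And>k r c. \<bar>mpow A k $ r $ c\<bar> \<le> B ^ k"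
    using mpow_entry_bound[of A] by blast
  have "norm ((1 / fact k) *\<^sub>R mpow (t *\<^sub>R A) k)
      \<le> (real CARD('m))\<^sup>2 * (inverse (fact k) * (\<bar>t\<bar> * B) ^ k)" for k
  proof -
    have "norm ((1 / fact k) *\<^sub>R mpow (t *\<^sub>R A) k) = (\<bar>t\<bar> ^ k / fact k) * norm (mpow A k)"
      by (simp add: mpow_scaleR power_abs)
    also have "\<dots> \<le> (\<bar>t\<bar> ^ k / fact k) * (\<Sum>r\<in>(UNIV::'m set). \<Sum>c\<in>(UNIV::'m set). B ^ k)"
      by (intro mult_left_mono order_trans[OF norm_matrix_le_sum_abs] sum_mono B) auto
    finally show ?thesis
      by (simp add: power2_eq_square power_mult_distrib field_simps)
  qed
  then show ?thesis
    by (intro summable_comparison_test[OF _ summable_mult[OF summable_exp]]) auto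
qed

lemma summable_mpow_entry_series:
  fixes A :: "real^'m::finite^'m"
  shows "summable (\<lambda>k. mpow A k $ r $ c / fact k * t ^ k)"
proof -
  obtain B where "0 \<le> B" and B: "\<And>k r c. \<bar>mpow A k $ r $ c\<bar> \<le> B ^ k"
    using mpow_entry_bound[of A] by blast
  have "norm (mpow A k $ r $ c / fact k * t ^ k) \<le> inverse (fact k) * (\<bar>t\<bar> * B) ^ k" for k
  proof -
    have "norm (mpow A k $ r $ c / fact k * t ^ k) = \<bar>mpow A k $ r $ c\<bar> * \<bar>t\<bar> ^ k / fact k"
      by (simp add: abs_mult power_abs)
    also have "\<dots> \<le> B ^ k * \<bar>t\<bar> ^ k / fact k"
      by (intro divide_right_mono mult_right_mono B) auto
    finally show ?thesis
      by (simp add: power_mult_distrib field_simps)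
  qed
  then show ?thesis
    by (intro summable_comparison_test[OF _ summable_exp]) auto
qed

lemma mexp_entry: "mexp (t *\<^sub>R A) $ r $ c = (\<Sum>k. mpow A k $ r $ c / fact k * t ^ k)"
proof -
  have "mexp (t *\<^sub>R A) $ r $ c = (\<Sum>k. ((1 / fact k) *\<^sub>R mpow (t *\<^sub>R A) k) $ r $ c)"
    unfolding mexp_def
    by (rule bounded_linear.suminf[OF bounded_linear_compose[OF bounded_linear_vec_nth
          bounded_linear_vec_nth] summable_mexp_series])
  also have "\<dots> = (\<Sum>k. mpow A k $ r $ c / fact k * t ^ k)"
    by (intro suminf_cong) (simp add: mpow_scaleR)
  finally show ?thesis .
qed

lemma mexp_zero: "mexp (0 *\<^sub>R A) = mat 1"
  unfolding vec_eq_iff mexp_entry powser_zero by (simp add: mat_def)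

lemma mexp_entry_has_derivative:
  "((\<lambda>t. mexp (t *\<^sub>R A) $ r $ c) has_real_derivative (A ** mexp (t *\<^sub>R A)) $ r $ c) (at t)"
proof -
  let ?a = "\<lambda>r c k. mpow A k $ r $ c / fact k"
  have "((\<lambda>t. \<Sum>k. ?a r c k * t ^ k) has_real_derivative (\<Sum>k. diffs (?a r c) k * t ^ k)) (at t)"
    by (rule termdiffs_strong[OF summable_mpow_entry_series[where t = "\<bar>t\<bar> + 1"]]) simp
  moreover have "(\<lambda>k. diffs (?a r c) k * t ^ k) = (\<lambda>k. \<Sum>j\<in>UNIV. A $ r $ j * (?a j c k * t ^ k))"
    by (simp add: fun_eq_iff diffs_def matrix_matrix_mult_def sum_distrib_left sum_divide_distrib
        sum_distrib_right field_simps del: of_nat_Suc)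
  moreover have "(\<Sum>k. \<Sum>j\<in>UNIV. A $ r $ j * (?a j c k * t ^ k))
      = (\<Sum>j\<in>UNIV. \<Sum>k. A $ r $ j * (?a j c k * t ^ k))"
    by (rule suminf_sum) (intro summable_mult summable_mpow_entry_series)
  moreover have "\<dots> = (A ** mexp (t *\<^sub>R A)) $ r $ c"
    by (simp only: matrix_matrix_mult_def vec_lambda_beta mexp_entry
        suminf_mult[OF summable_mpow_entry_series])
  ultimately show ?thesis
    by (simp add: mexp_entry)
qed

lemma has_vector_derivative_inner:
  "(f has_vector_derivative f') (at t) \<Longrightarrow> (g has_vector_derivative g') (at t) \<Longrightarrow>
   ((\<lambda>t. f t \<bullet> g t) has_vector_derivative (f t \<bullet> g' + f' \<bullet> g t)) (at t)"
  by (rule bounded_bilinear.has_vector_derivative[OF bounded_bilinear_inner])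

lemma has_vector_derivative_matrix_vector_mult:
  "(f has_vector_derivative f') F \<Longrightarrow>
   ((\<lambda>t. (A::real^'n^'m) *v f t) has_vector_derivative (A *v f')) F"
  by (rule bounded_linear.has_vector_derivative[OF matrix_vector_mul_bounded_linear])

lemma has_vector_derivative_scaleR_right:
  "(f has_vector_derivative f') F \<Longrightarrow> ((\<lambda>t. c *\<^sub>R f t) has_vector_derivative (c *\<^sub>R f')) F"
  by (rule bounded_linear.has_vector_derivative[OF bounded_linear_scaleR_right])

lemma has_vector_derivative_componentwise:
  fixes f :: "real \<Rightarrow> real^'n"
  assumes "\<And>j. ((\<lambda>t. f t $ j) has_real_derivative f' $ j) (at t within S)"
  shows "(f has_vector_derivative f') (at t within S)"
proof -
  have "((\<lambda>t. f t \<bullet> i) has_derivative (\<lambda>h. (h *\<^sub>R f') \<bullet> i)) (at t within S)" if "i \<in> Basis" for i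
  proof -
    from that obtain j where i: "i = axis j 1"
      by (auto simp: Basis_vec_def)
    have "(\<lambda>h. h * f' $ j) = (*) (f' $ j)"
      by (auto simp: fun_eq_iff)
    then show ?thesis
      using assms[of j] unfolding i has_field_derivative_def
      by (simp add: cart_eq_inner_axis[symmetric])
  qed
  then show ?thesis
    unfolding has_vector_derivative_def by (subst has_derivative_componentwise_within) auto
qed

section \<open>Lyapunov functions for damped second-order consensus\<close>

definition consensus_lyapunov :: "real^'n^'n \<Rightarrow> real \<Rightarrow> real^'n \<Rightarrow> real^'n \<Rightarrow> real" where
  "consensus_lyapunov P b x v =
     (1 / (2 * b)) * ((P *v v + b *\<^sub>R x) \<bullet> (P *v v + b *\<^sub>R x) + x \<bullet> (P *v x))"

definition strict_consensus_lyapunov ::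
    "real^'n^'n \<Rightarrow> real^'n^'n \<Rightarrow> real \<Rightarrow> real \<Rightarrow> real^'n \<Rightarrow> real^'n \<Rightarrow> real" where
  "strict_consensus_lyapunov L P b \<alpha> x v =
     \<alpha> * consensus_lyapunov P b x v - x \<bullet> v - (b / 2) * (x \<bullet> (L *v x))"

locale damped_consensus_trajectory =
  fixes L P M :: "real^'n::finite^'n" and b :: real and x v :: "real \<Rightarrow> real^'n"
  assumes transpose_L: "transpose L = L" and transpose_P: "transpose P = P"
    and L_mult_P: "L ** P = M" and P_mult_L: "P ** L = M" and M_mult_P: "M ** P = P"
    and L_psd: "\<And>y. 0 \<le> y \<bullet> (L *v y)"
    and b_pos: "0 < b"
    and x_deriv: "\<And>t. (x has_vector_derivative v t) (at t)"
    and v_deriv: "\<And>t. (v has_vector_derivative (- (L *v x t) - b *\<^sub>R (L *v v t))) (at t)"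
    and M_x: "\<And>t. M *v x t = x t" and M_v: "\<And>t. M *v v t = v t"
begin

abbreviation W :: "real \<Rightarrow> real" where
  "W t \<equiv> consensus_lyapunov P b (x t) (v t)"

lemma P_psd: "0 \<le> y \<bullet> (P *v y)"
proof -
  have "P *v (L *v (P *v y)) = (P ** L ** P) *v y"
    by (simp add: matrix_vector_mul_assoc matrix_mul_assoc)
  then have "P *v y = P *v (L *v (P *v y))"
    by (simp add: P_mult_L M_mult_P)
  then have "y \<bullet> (P *v y) = (P *v y) \<bullet> (L *v (P *v y))"
    by (metis inner_matrix_vector_symmetric[OF transpose_P])
  then show ?thesis
    using L_psd by simp
qed

lemma consensus_lyapunov_ge:
  "(1 / (2 * b)) * ((P *v z + b *\<^sub>R y) \<bullet> (P *v z + b *\<^sub>R y)) \<le> consensus_lyapunov P b y z"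
  unfolding consensus_lyapunov_def using P_psd[of y] b_pos by (simp add: distrib_left)

lemma consensus_lyapunov_nonneg: "0 \<le> consensus_lyapunov P b y z"
  by (rule order_trans[OF _ consensus_lyapunov_ge]) (use b_pos in simp)

lemma consensus_lyapunov_has_derivative: "(W has_vector_derivative - (x t \<bullet> x t)) (at t)"
proof -
  let ?s = "\<lambda>t. P *v v t + b *\<^sub>R x t"
  let ?s' = "P *v (- (L *v x t) - b *\<^sub>R (L *v v t)) + b *\<^sub>R v t"
  have s': "?s' = - x t"
    by (simp add: matrix_vector_mult_diff_distrib matrix_vector_mult_scaleR vec.neg
        matrix_vector_mul_assoc P_mult_L M_x M_v)
  have "(?s has_vector_derivative - x t) (at t)"
    unfolding s'[symmetric]
    by (intro has_vector_derivative_add has_vector_derivative_matrix_vector_mult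
        has_vector_derivative_scaleR_right x_deriv v_deriv)
  then have "(W has_vector_derivative (1 / (2 * b)) *
      ((?s t \<bullet> - x t + - x t \<bullet> ?s t) + (x t \<bullet> (P *v v t) + v t \<bullet> (P *v x t)))) (at t)"
    unfolding consensus_lyapunov_def
    by (intro has_vector_derivative_mult_right has_vector_derivative_add
        has_vector_derivative_inner has_vector_derivative_matrix_vector_mult x_deriv)
  moreover have "v t \<bullet> (P *v x t) = x t \<bullet> (P *v v t)"
    by (metis inner_commute inner_matrix_vector_symmetric[OF transpose_P])
  ultimately show ?thesis
    using b_pos by (simp add: inner_add_left inner_add_right inner_commute field_simps)
qed

lemma strict_consensus_lyapunov_has_derivative:
  "((\<lambda>t. strict_consensus_lyapunov L P b \<alpha> (x t) (v t)) has_vector_derivative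
     - \<alpha> * (x t \<bullet> x t) - v t \<bullet> v t + x t \<bullet> (L *v x t)) (at t)"
proof -
  have "((\<lambda>t. strict_consensus_lyapunov L P b \<alpha> (x t) (v t)) has_vector_derivative
     \<alpha> * - (x t \<bullet> x t) - (x t \<bullet> (- (L *v x t) - b *\<^sub>R (L *v v t)) + v t \<bullet> v t)
      - (b / 2) * (x t \<bullet> (L *v v t) + v t \<bullet> (L *v x t))) (at t)"
    unfolding strict_consensus_lyapunov_def
    by (intro has_vector_derivative_diff has_vector_derivative_mult_right
        consensus_lyapunov_has_derivative has_vector_derivative_inner
        has_vector_derivative_matrix_vector_mult x_deriv v_deriv)
  moreover have "v t \<bullet> (L *v x t) = x t \<bullet> (L *v v t)"
    by (metis inner_commute inner_matrix_vector_symmetric[OF transpose_L])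
  ultimately show ?thesis
    by (simp add: inner_diff_right field_simps)
qed

text \<open>
  The cross terms of the strict Lyapunov function are controlled through \<open>v = L (P v)\<close>, which
  turns \<open>x\<^sup>T v + (b/2) x\<^sup>T L x\<close> into a difference of two \<open>L\<close>-quadratic forms.
\<close>

lemma strict_consensus_lyapunov_nonneg:
  assumes \<Lambda>: "\<And>y. y \<bullet> (L *v y) \<le> \<Lambda> * (y \<bullet> y)" and "0 \<le> \<Lambda>" and "\<Lambda> \<le> \<alpha>"
  shows "0 \<le> strict_consensus_lyapunov L P b \<alpha> (x t) (v t)"
proof -
  let ?r = "P *v v t" and ?s = "P *v v t + b *\<^sub>R x t"
  have v_eq: "v t = L *v ?r"
    by (simp add: matrix_vector_mul_assoc L_mult_P M_v)
  have "?r \<bullet> (L *v x t) = x t \<bullet> (L *v ?r)"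
    by (metis inner_commute inner_matrix_vector_symmetric[OF transpose_L])
  then have "x t \<bullet> (L *v ?r) + (b / 2) * (x t \<bullet> (L *v x t))
      = (1 / (2 * b)) * (?s \<bullet> (L *v ?s)) - (1 / (2 * b)) * (?r \<bullet> (L *v ?r))"
    using b_pos by (simp add: matrix_vector_right_distrib matrix_vector_mult_scaleR inner_add_left
        inner_add_right field_simps)
  then have cross: "x t \<bullet> v t + (b / 2) * (x t \<bullet> (L *v x t))
      = (1 / (2 * b)) * (?s \<bullet> (L *v ?s)) - (1 / (2 * b)) * (?r \<bullet> (L *v ?r))"
    by (simp only: v_eq[symmetric])
  have "(1 / (2 * b)) * (?s \<bullet> (L *v ?s)) \<le> \<Lambda> * ((1 / (2 * b)) * (?s \<bullet> ?s))"
    using \<Lambda>[of ?s] b_pos by (simp add: field_simps)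
  also have "\<dots> \<le> \<Lambda> * W t"
    using consensus_lyapunov_ge \<open>0 \<le> \<Lambda>\<close> by (intro mult_left_mono) auto
  also have "\<dots> \<le> \<alpha> * W t"
    using \<open>\<Lambda> \<le> \<alpha>\<close> consensus_lyapunov_nonneg by (intro mult_right_mono) auto
  finally have "(1 / (2 * b)) * (?s \<bullet> (L *v ?s)) \<le> \<alpha> * W t" .
  moreover have "0 \<le> (1 / (2 * b)) * (?r \<bullet> (L *v ?r))"
    using L_psd[of ?r] b_pos by simp
  ultimately show ?thesis
    unfolding strict_consensus_lyapunov_def using cross by linarith
qed

lemma consensus_lyapunov_le:
  obtains C where "0 < C" and "\<And>y z. consensus_lyapunov P b y z \<le> C * (y \<bullet> y + z \<bullet> z)"
proof -
  obtain K where "0 < K" and K: "\<And>y. norm (P *v y) \<le> K * norm y"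
    and K': "\<And>y. y \<bullet> (P *v y) \<le> K * (y \<bullet> y)"
    using matrix_vector_mult_bound[of P] by blast
  define C where "C = (2 * K\<^sup>2 + 2 * b\<^sup>2 + K) / (2 * b)"
  have "consensus_lyapunov P b y z \<le> C * (y \<bullet> y + z \<bullet> z)" for y z
  proof -
    have "norm (P *v z + b *\<^sub>R y) \<le> K * norm z + b * norm y"
      using norm_triangle_ineq[of "P *v z" "b *\<^sub>R y"] K[of z] b_pos by simp
    then have "(P *v z + b *\<^sub>R y) \<bullet> (P *v z + b *\<^sub>R y) \<le> (K * norm z + b * norm y)\<^sup>2"
      by (simp add: dot_square_norm power_mono)
    also have "\<dots> \<le> 2 * K\<^sup>2 * (z \<bullet> z) + 2 * b\<^sup>2 * (y \<bullet> y)"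
      using sum_squares_ge_zero[of "K * norm z - b * norm y" 0]
      by (simp add: dot_square_norm power2_eq_square algebra_simps)
    finally have "consensus_lyapunov P b y z
        \<le> (1 / (2 * b)) * (2 * K\<^sup>2 * (z \<bullet> z) + 2 * b\<^sup>2 * (y \<bullet> y) + K * (y \<bullet> y))"
      unfolding consensus_lyapunov_def using K'[of y] b_pos
      by (intro mult_left_mono add_mono) auto
    also have "\<dots> \<le> C * (y \<bullet> y + z \<bullet> z)"
      unfolding C_def using b_pos \<open>0 < K\<close>
      by (simp add: field_simps mult_right_mono)
    finally show ?thesis .
  qed
  moreover have "0 < C"
    unfolding C_def using \<open>0 < K\<close> b_pos by (intro divide_pos_pos add_pos_pos) auto
  ultimately show ?thesis
    using that by blast
qed

lemma consensus_lyapunov_antimono: "s \<le> T \<Longrightarrow> W T \<le> W s"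
  by (rule DERIV_nonpos_imp_nonincreasing[where f = W])
     (auto simp: has_real_derivative_iff_has_vector_derivative intro!: exI consensus_lyapunov_has_derivative)

text \<open>
  Along the trajectory the strict Lyapunov function \<open>G\<close> decreases at least at rate
  \<open>|x|\<^sup>2 + |v|\<^sup>2 \<ge> W/C\<close>; since \<open>W\<close> is nonincreasing, \<open>G(s) + s W(T)/C\<close> is nonincreasing on
  \<open>[0, T]\<close>, whence \<open>T W(T) \<le> C G(0)\<close>.
\<close>

lemma consensus_lyapunov_decay:
  obtains D where "\<And>T. 0 < T \<Longrightarrow> W T \<le> D / T"
proof -
  obtain K where "0 < K" and K: "\<And>y. y \<bullet> (L *v y) \<le> K * (y \<bullet> y)"
    using matrix_vector_mult_bound[of L] by blast
  obtain C where "0 < C" and C: "\<And>y z. consensus_lyapunov P b y z \<le> C * (y \<bullet> y + z \<bullet> z)"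
    using consensus_lyapunov_le by blast
  let ?G = "\<lambda>t. strict_consensus_lyapunov L P b (K + 1) (x t) (v t)"
  have "W T \<le> C * ?G 0 / T" if "0 < T" for T
  proof -
    let ?H = "\<lambda>s. ?G s + s * (W T / C)"
    have "?H T \<le> ?H 0"
    proof (rule DERIV_nonpos_imp_nonincreasing[where f = ?H])
      fix s assume s: "0 \<le> s" "s \<le> T"
      let ?d = "- (K + 1) * (x s \<bullet> x s) - v s \<bullet> v s + x s \<bullet> (L *v x s) + 1 * (W T / C)"
      have "(?H has_real_derivative ?d) (at s)"
        unfolding has_real_derivative_iff_has_vector_derivative
        by (intro has_vector_derivative_add strict_consensus_lyapunov_has_derivative
            has_vector_derivative_mult_left[OF has_vector_derivative_id])
      moreover have "?d \<le> 0"
      proof -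
        have "- (K + 1) * (x s \<bullet> x s) - v s \<bullet> v s + x s \<bullet> (L *v x s) \<le> - (x s \<bullet> x s + v s \<bullet> v s)"
          using K[of "x s"] by (simp add: algebra_simps)
        also have "\<dots> \<le> - (W s / C)"
          using C[of "x s" "v s"] \<open>0 < C\<close> by (simp add: field_simps)
        also have "\<dots> \<le> - (W T / C)"
          using consensus_lyapunov_antimono[OF s(2)] \<open>0 < C\<close> by (simp add: divide_right_mono)
        finally show ?thesis
          by simp
      qed
      ultimately show "\<exists>y. (?H has_real_derivative y) (at s) \<and> y \<le> 0"
        by blast
    qed (use that in simp)
    moreover have "0 \<le> ?G T"
      using K \<open>0 < K\<close> by (intro strict_consensus_lyapunov_nonneg) auto
    ultimately have "T * (W T / C) \<le> ?G 0"
      by simp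
    then show ?thesis
      using that \<open>0 < C\<close> by (simp add: field_simps)
  qed
  then show ?thesis
    using that by blast
qed

lemma consensus_lyapunov_tendsto_0: "(\<lambda>k. W (real k)) \<longlonglongrightarrow> 0"
proof -
  obtain D where D: "\<And>T. 0 < T \<Longrightarrow> W T \<le> D / T"
    using consensus_lyapunov_decay by blast
  show ?thesis
  proof (rule real_tendsto_sandwich[where f = "\<lambda>_. 0" and h = "\<lambda>k. D / real k"])
    show "\<forall>\<^sub>F k in sequentially. 0 \<le> W (real k)"
      by (simp add: consensus_lyapunov_nonneg)
    show "\<forall>\<^sub>F k in sequentially. W (real k) \<le> D / real k"
      unfolding eventually_sequentially by (intro exI[of _ 1] allI impI D) simp
  qed (simp_all add: lim_const_over_n)
qed

lemma has_integral_consensus_lyapunov: "((\<lambda>t. x t \<bullet> x t) has_integral W 0) {0..}"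
proof -
  let ?f = "\<lambda>t. x t \<bullet> x t"
  let ?g = "\<lambda>k t. if t \<in> {0..real k} then ?f t else 0"
  have "((\<lambda>t. - (- ?f t)) has_integral (- W T - - W 0)) {0..T}" if "0 \<le> T" for T
    by (rule fundamental_theorem_of_calculus[OF that], rule has_vector_derivative_at_within,
        rule has_vector_derivative_minus, rule consensus_lyapunov_has_derivative)
  then have g: "(?g k has_integral (W 0 - W (real k))) {0..}" for k
    by (subst has_integral_restrict) auto
  then have g_eq: "integral {0..} (?g k) = W 0 - W (real k)" for k
    by (rule integral_unique)
  have "?f integrable_on {0..} \<and> (\<lambda>k. integral {0..} (?g k)) \<longlonglongrightarrow> integral {0..} ?f"
  proof (rule monotone_convergence_increasing)
    show "?g k integrable_on {0..}" for k
      using g by blast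
    show "?g k t \<le> ?g (Suc k) t" for k t
      by auto
    show "(\<lambda>k. ?g k t) \<longlonglongrightarrow> ?f t" if "t \<in> {0..}" for t
    proof (rule tendsto_eventually)
      show "\<forall>\<^sub>F k in sequentially. ?g k t = ?f t"
        unfolding eventually_sequentially using that real_nat_ceiling_ge[of t]
        by (intro exI[of _ "nat \<lceil>t\<rceil>"]) (auto intro: order_trans)
    qed
    have "norm (integral {0..} (?g k)) \<le> W 0" for k
      unfolding g_eq using consensus_lyapunov_nonneg[of "x (real k)" "v (real k)"]
        consensus_lyapunov_antimono[of 0 "real k"] by simp
    then show "bounded (range (\<lambda>k. integral {0..} (?g k)))"
      unfolding bounded_iff by blast
  qed
  moreover have "(\<lambda>k. integral {0..} (?g k)) \<longlonglongrightarrow> W 0"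
    unfolding g_eq using tendsto_diff[OF tendsto_const consensus_lyapunov_tendsto_0, of "W 0"]
    by simp
  ultimately have "?f integrable_on {0..}" and "integral {0..} ?f = W 0"
    using LIMSEQ_unique by blast+
  then show ?thesis
    using integrable_integral by fastforce
qed

end

section \<open>The second-order consensus network\<close>

definition impulse_position :: "real \<Rightarrow> real^'n^'n \<Rightarrow> 'n \<Rightarrow> real \<Rightarrow> real^'n" where
  "impulse_position b L k t = (\<chi> j. mexp (t *\<^sub>R so_A b L) $ Inl j $ Inr k)"

definition impulse_velocity :: "real \<Rightarrow> real^'n^'n \<Rightarrow> 'n \<Rightarrow> real \<Rightarrow> real^'n" where
  "impulse_velocity b L k t = (\<chi> j. mexp (t *\<^sub>R so_A b L) $ Inr j $ Inr k)"

lemma so_A_mult_Inl: "(so_A b L ** Z) $ Inl j $ c = Z $ Inr j $ c"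
  by (simp add: matrix_matrix_mult_def sum.Plus[of UNIV UNIV, simplified] so_A_def
      if_distrib if_distribR cong: if_cong)

lemma so_A_mult_Inr:
  "(so_A b L ** Z) $ Inr j $ c = - (L *v (\<chi> a. Z $ Inl a $ c)) $ j - b * (L *v (\<chi> a. Z $ Inr a $ c)) $ j"
  by (simp add: matrix_matrix_mult_def sum.Plus[of UNIV UNIV, simplified] so_A_def
      matrix_vector_mult_def sum_negf sum_distrib_left mult_ac)

lemma impulse_position_has_derivative:
  "(impulse_position b L k has_vector_derivative impulse_velocity b L k t) (at t)"
  using mexp_entry_has_derivative[of "so_A b L" "Inl _" "Inr k" t]
  by (intro has_vector_derivative_componentwise)
     (simp add: impulse_position_def impulse_velocity_def so_A_mult_Inl)

lemma impulse_velocity_has_derivative: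
  "(impulse_velocity b L k has_vector_derivative
     - (L *v impulse_position b L k t) - b *\<^sub>R (L *v impulse_velocity b L k t)) (at t)"
  using mexp_entry_has_derivative[of "so_A b L" "Inr _" "Inr k" t]
  by (intro has_vector_derivative_componentwise)
     (simp add: impulse_position_def impulse_velocity_def so_A_mult_Inr)

lemma impulse_position_0: "impulse_position b L k 0 = 0"
  by (simp add: impulse_position_def vec_eq_iff mexp_zero[simplified] mat_def)

lemma impulse_velocity_0: "impulse_velocity b L k 0 = axis k 1"
  by (simp add: impulse_velocity_def vec_eq_iff mexp_zero[simplified] mat_def axis_def)

lemma trace_output_gramian:
  "trace (so_C ** mexp (t *\<^sub>R so_A b L) ** so_B \<sigma> ** transpose (so_C ** mexp (t *\<^sub>R so_A b L) ** so_B \<sigma>))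
   = (\<Sum>k\<in>UNIV. (\<sigma> $ k)\<^sup>2 *
       ((centering *v impulse_position b L k t) \<bullet> (centering *v impulse_position b L k t)))"
proof -
  let ?y = "\<lambda>k. centering *v impulse_position b L k t"
  let ?Y = "so_C ** mexp (t *\<^sub>R so_A b L) ** so_B \<sigma>"
  have "(so_C ** mexp (t *\<^sub>R so_A b L)) $ i $ Inr k = ?y k $ i" for i k
    by (simp add: matrix_matrix_mult_def sum.Plus[of UNIV UNIV, simplified] so_C_def
        impulse_position_def matrix_vector_mult_def)
  then have Y: "?Y $ i $ k = \<sigma> $ k * ?y k $ i" for i k
    by (simp add: matrix_matrix_mult_def sum.Plus[of UNIV UNIV, simplified] so_B_def
        if_distrib cong: if_cong)
  have "trace (?Y ** transpose ?Y) = (\<Sum>i\<in>UNIV. \<Sum>k\<in>UNIV. ?Y $ i $ k * ?Y $ i $ k)"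
    by (simp add: trace_def matrix_matrix_mult_def[of ?Y] transpose_def)
  also have "\<dots> = (\<Sum>i\<in>UNIV. \<Sum>k\<in>UNIV. (\<sigma> $ k)\<^sup>2 * (?y k $ i * ?y k $ i))"
    by (simp only: Y) (simp add: power2_eq_square mult_ac)
  also have "\<dots> = (\<Sum>k\<in>UNIV. (\<sigma> $ k)\<^sup>2 * (?y k \<bullet> ?y k))"
    by (subst sum.swap) (simp add: inner_vec_def sum_distrib_left)
  finally show ?thesis .
qed

context
  fixes w :: "'n::finite \<Rightarrow> 'n \<Rightarrow> real" and b :: real
  assumes graph: "weighted_undirected_graph w" and connected: "graph_connected w" and b_pos: "0 < b"
begin

lemma has_integral_centered_impulse_position:
  "((\<lambda>t. (centering *v impulse_position b (laplacian w) k t) \<bullet>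
          (centering *v impulse_position b (laplacian w) k t))
     has_integral (1 / (2 * b)) * pinv (laplacian w ** laplacian w) $ k $ k) {0..}"
proof -
  let ?L = "laplacian w" and ?P = "pinv (laplacian w)"
  let ?x = "\<lambda>t. centering *v impulse_position b ?L k t"
  let ?v = "\<lambda>t. centering *v impulse_velocity b ?L k t"
  have M_L: "centering *v (?L *v y) = ?L *v (centering *v y)" for y
    by (simp add: matrix_vector_mul_assoc centering_mult_laplacian[OF graph]
        laplacian_mult_centering[OF graph])
  interpret damped_consensus_trajectory ?L ?P centering b ?x ?v
  proof
    show "(?x has_vector_derivative ?v t) (at t)" for t
      by (intro has_vector_derivative_matrix_vector_mult impulse_position_has_derivative)
    show "(?v has_vector_derivative - (?L *v ?x t) - b *\<^sub>R (?L *v ?v t)) (at t)" for t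
      using has_vector_derivative_matrix_vector_mult[of _ _ _ centering,
          OF impulse_velocity_has_derivative[of b ?L k t]]
      by (simp add: matrix_vector_mult_diff_distrib vec.neg matrix_vector_mult_scaleR M_L)
  qed (simp_all add: transpose_laplacian[OF graph] laplacian_psd[OF graph] b_pos
      matrix_vector_mul_assoc centering_idem laplacian_pinv[OF graph connected])
  have "?P *v ?v 0 = ?P *v axis k 1"
    by (simp add: impulse_velocity_0 matrix_vector_mul_assoc laplacian_pinv[OF graph connected])
  moreover have "(?P *v axis k 1) \<bullet> (?P *v axis k 1) = (?P ** ?P) $ k $ k"
    using transpose_pinv_laplacian[OF graph connected]
    by (simp add: inner_vec_def matrix_vector_mult_def axis_def matrix_matrix_mult_def transpose_def
        vec_eq_iff if_distrib cong: if_cong)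
  ultimately have "W 0 = (1 / (2 * b)) * pinv (?L ** ?L) $ k $ k"
    by (simp add: consensus_lyapunov_def impulse_position_0 pinv_laplacian_square[OF graph connected])
  then show ?thesis
    using has_integral_consensus_lyapunov by simp
qed

lemma rho_ss_laplacian:
  "rho_ss b (laplacian w) \<sigma> = (\<Sum>k\<in>UNIV. (\<sigma> $ k)\<^sup>2 * ((1 / (2 * b)) * pinv (laplacian w ** laplacian w) $ k $ k))"
  unfolding rho_ss_def trace_output_gramian
  by (intro integral_unique has_integral_sum has_integral_mult_right
      has_integral_centered_impulse_position) auto

end

theorem corollary1:
  fixes w :: "'n::finite \<Rightarrow> 'n \<Rightarrow> real" and b :: real and \<sigma> :: "real^'n" and i :: 'n
  assumes "weighted_undirected_graph w"
    and "graph_connected w"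
    and "0 < b"
    and "\<forall>j. 0 < \<sigma> $ j"
  shows "((\<lambda>u. rho_ss b (laplacian w) (\<chi> j. if j = i then sqrt u else \<sigma> $ j))
           has_real_derivative
           (1 / (2 * b)) * (pinv (laplacian w ** laplacian w)) $ i $ i) (at ((\<sigma> $ i)\<^sup>2))"
proof -
  define \<eta> where "\<eta> k = (1 / (2 * b)) * pinv (laplacian w ** laplacian w) $ k $ k" for k
  define c where "c = (\<Sum>k\<in>UNIV - {i}. (\<sigma> $ k)\<^sup>2 * \<eta> k)"
  have affine: "rho_ss b (laplacian w) (\<chi> j. if j = i then sqrt u else \<sigma> $ j) = c + u * \<eta> i"
    if "0 < u" for u
    using that unfolding c_def \<eta>_def
    by (simp add: rho_ss_laplacian[OF assms(1-3)] sum.remove[of UNIV i] if_distrib cong: if_cong)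
  have "((\<lambda>u. c + u * \<eta> i) has_real_derivative \<eta> i) (at ((\<sigma> $ i)\<^sup>2))"
    by (auto intro!: derivative_eq_intros)
  then have "((\<lambda>u. rho_ss b (laplacian w) (\<chi> j. if j = i then sqrt u else \<sigma> $ j))
      has_real_derivative \<eta> i) (at ((\<sigma> $ i)\<^sup>2))"
    by (rule has_field_derivative_transform_within_open[of _ _ _ "{0<..}"])
       (use assms(4)[rule_format, of i] affine in auto)
  then show ?thesis
    by (simp add: \<eta>_def)
qed

end
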